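(* Let $\alpha_1,\alpha_2,\alpha_3>0$ with $\alpha_1^{-2}=\alpha_2^{-2}+\alpha_3^{-2}$, let $a_1=-\alpha_2\alpha_3/\alpha_1$, $a_2=\alpha_3\alpha_1/\alpha_2$, $a_3=\alpha_1\alpha_2/\alpha_3$, let $\lambda>0$ with $\lambda^2=a_2^2-a_1a_3$, and let $b_1,\dots,b_5,c_1,\dots,c_5,d_1,\dots,d_6$ be real constants as in the context (eigenvector data). Let $B,B',C,C',D,D'\in\mathbb{C}$ be arbitrary. Define $w_j:\mathbb{R}\to\mathbb{C}$ by $2w_1=i\alpha_1e^{ia_1t}$, $2w_2=\alpha_2e^{ia_2t}$, $2w_3=\alpha_3e^{ia_3t}$; define $x=2\,\mathrm{Re}\big((Bb_1+Cc_1)e^{\frac i2\lambda t}\big)$, $p_1=ie^{ia_1t}\big(Bb_2e^{\frac i2\lambda t}+\bar Bb_4e^{-\frac i2\lambda t}+Dd_1e^{\frac{3i}2\lambda t}+\bar Dd_4e^{-\frac{3i}2\lambda t}\big)$, $p_2=e^{ia_2t}\big(Cc_2e^{\frac i2\lambda t}+\bar Cc_4e^{-\frac i2\lambda t}+Dd_2e^{\frac{3i}2\lambda t}+\bar Dd_5e^{-\frac{3i}2\lambda t}\big)$, $p_3=e^{ia_3t}\big((Bb_3+Cc_3)e^{\frac i2\lambda t}+(\bar Bb_5+\bar Cc_5)e^{-\frac i2\lambda t}+Dd_3e^{\frac{3i}2\lambda t}+\bar Dd_6e^{-\frac{3i}2\lambda t}\big)$, and define $y,q_1,q_2,q_3$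 by the same formulas with $B,C,D$ replaced by $B',C',D'$ (so $y$ replaces $x$, $q_j$ replaces $p_j$). Let $z:\mathbb{R}\to\mathbb{R}$ and $r_1,r_2,r_3:\mathbb{R}\to\mathbb{C}$ be any functions with $\frac{dz}{dt}=\mathrm{Im}(\bar p_1q_1-\bar p_2q_2-\bar p_3q_3)$, $\frac{dr_1}{dt}=ixp_1+iyq_1+\overline{p_2p_3}+\overline{q_2q_3}$, $\frac{dr_2}{dt}=ixp_2-iyq_2-\overline{p_3p_1}+\overline{q_3q_1}$, $\frac{dr_3}{dt}=ixq_3+iyp_3-\overline{p_1q_2}-\overline{p_2q_1}$. Then the subset of $\mathbb{R}^7=\mathbb{R}\oplus\mathbb{C}^3$ $$M=\Big\{\big(y_1y(t)-y_2x(t)+z(t),\ \tfrac12(y_1^2+y_2^2)w_1(t)+y_1p_1(t)+y_2q_1(t)+r_1(t),\ \tfrac12(y_1^2-y_2^2)w_2(t)+y_1p_2(t)-y_2q_2(t)+r_2(t),\ y_1y_2w_3(t)+y_1q_3(t)+y_2p_3(t)+r_3(t)\big):y_1,y_2,t\in\mathbb{R}\Big\}$$ is an associative 3-fold in $\mathbb{R}^7$ wherever it is nonsingular.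
   Context: Let $(x_1,\dots,x_7)$ be coordinates on $\mathbb{R}^7$ with Euclidean metric $g$, and write $dx_{ijk}=dx_i\wedge dx_j\wedge dx_k$. Define $\varphi=dx_{123}+dx_{145}+dx_{167}+dx_{246}-dx_{257}-dx_{347}-dx_{356}$. An oriented 3-dimensional (immersed) submanifold $N\subseteq\mathbb{R}^7$ is an associative 3-fold if $\varphi|_{T_xN}=\mathrm{vol}_{T_xN}$ for all $x\in N$. Identify $\mathbb{R}^7=\mathbb{R}\oplus\mathbb{C}^3$ via $(x_1,\dots,x_7)\mapsto(x_1,\,x_2+ix_3,\,x_4+ix_5,\,x_6+ix_7)$. Eigenvector data: with $T$ the real $7\times7$ matrix whose rows are $(0,-\frac{\alpha_1}{2},\frac{\alpha_2}{2},\frac{\alpha_3}{2},\frac{\alpha_1}{2},-\frac{\alpha_2}{2},-\frac{\alpha_3}{2})$, $(\alpha_1,-2a_1,0,0,0,-\alpha_3,-\alpha_2)$, $(\alpha_2,0,-2a_2,0,\alpha_3,0,\alpha_1)$, $(\alpha_3,0,0,-2a_3,\alpha_2,\alpha_1,0)$, $(-\alpha_1,0,\alpha_3,\alpha_2,2a_1,0,0)$, $(-\alpha_2,-\alpha_3,0,-\alpha_1,0,2a_2,0)$, $(-\alpha_3,-\alpha_2,-\alpha_1,0,0,0,2a_3)$, the real constants $b_j,c_j,d_j$ are such that $\mathbf{b}_\pm,\mathbf{c}_\pm,\mathbf{d}_\pm$ are nonzero and $T\mathbf{b}_\pm=\pm\lambda\mathbf{b}_\pm$, $T\mathbf{c}_\pm=\pm\lambda\mathbf{c}_\pm$,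 $T\mathbf{d}_\pm=\pm3\lambda\mathbf{d}_\pm$, where $\mathbf{b}_+=(b_1,b_2,0,b_3,b_4,0,b_5)^{\mathrm T}$, $\mathbf{b}_-=(b_1,b_4,0,b_5,b_2,0,b_3)^{\mathrm T}$, $\mathbf{c}_+=(c_1,0,c_2,c_3,0,c_4,c_5)^{\mathrm T}$, $\mathbf{c}_-=(c_1,0,c_4,c_5,0,c_2,c_3)^{\mathrm T}$, $\mathbf{d}_+=(0,d_1,\dots,d_6)^{\mathrm T}$, $\mathbf{d}_-=(0,d_4,d_5,d_6,d_1,d_2,d_3)^{\mathrm T}$. *)

theory Defs
  imports "HOL-Analysis.Analysis"
begin

definition coords :: "real \<times> complex \<times> complex \<times> complex \<Rightarrow> nat \<Rightarrow> real" where
  "coords v = (case v of (x1, z1, z2, z3) \<Rightarrow> (\<lambda>i.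
     if i = 1 then x1 else if i = 2 then Re z1 else if i = 3 then Im z1
     else if i = 4 then Re z2 else if i = 5 then Im z2
     else if i = 6 then Re z3 else if i = 7 then Im z3 else 0))"

text \<open>dx_i ^ dx_j ^ dx_k evaluated on (u,v,w) = det of the 3x3 matrix of components.\<close>
definition dx3 :: "nat \<Rightarrow> nat \<Rightarrow> nat \<Rightarrow> (nat \<Rightarrow> real) \<Rightarrow> (nat \<Rightarrow> real) \<Rightarrow> (nat \<Rightarrow> real) \<Rightarrow> real" where
  "dx3 i j k u v w =
     u i * (v j * w k - v k * w j) - u j * (v i * w k - v k * w i) + u k * (v i * w j - v j * w i)"

definition phi7 :: "(nat \<Rightarrow> real) \<Rightarrow> (nat \<Rightarrow> real) \<Rightarrow> (nat \<Rightarrow> real) \<Rightarrow> real" where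
  "phi7 u v w = dx3 1 2 3 u v w + dx3 1 4 5 u v w + dx3 1 6 7 u v w + dx3 2 4 6 u v w
              - dx3 2 5 7 u v w - dx3 3 4 7 u v w - dx3 3 5 6 u v w"

definition inner7 :: "(nat \<Rightarrow> real) \<Rightarrow> (nat \<Rightarrow> real) \<Rightarrow> real" where
  "inner7 u v = (\<Sum>i=1..7. u i * v i)"

definition vol3 :: "(nat \<Rightarrow> real) \<Rightarrow> (nat \<Rightarrow> real) \<Rightarrow> (nat \<Rightarrow> real) \<Rightarrow> real" where
  "vol3 u v w = (let g = inner7 in sqrt (
     g u u * (g v v * g w w - g v w * g w v) - g u v * (g v u * g w w - g v w * g w u)
     + g u w * (g v u * g w v - g v v * g w u)))"

text \<open>The 3-plane spanned by u,v,w is associative: for one of its two orientations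
  phi restricts to the volume form, i.e. phi(u,v,w) = vol(u,v,w) (orientation of (u,v,w))
  or phi(u,v,w) = - vol(u,v,w) (opposite orientation).\<close>
definition associative_plane :: "(nat \<Rightarrow> real) \<Rightarrow> (nat \<Rightarrow> real) \<Rightarrow> (nat \<Rightarrow> real) \<Rightarrow> bool" where
  "associative_plane u v w \<longleftrightarrow> phi7 u v w = vol3 u v w \<or> phi7 u v w = - vol3 u v w"

definition Tmat :: "real \<Rightarrow> real \<Rightarrow> real \<Rightarrow> real \<Rightarrow> real \<Rightarrow> real \<Rightarrow> real list list" where
  "Tmat al1 al2 al3 a1 a2 a3 =
    [[0, -al1/2, al2/2, al3/2, al1/2, -al2/2, -al3/2],
     [al1, -2*a1, 0, 0, 0, -al3, -al2],
     [al2, 0, -2*a2, 0, al3, 0, al1],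
     [al3, 0, 0, -2*a3, al2, al1, 0],
     [-al1, 0, al3, al2, 2*a1, 0, 0],
     [-al2, -al3, 0, -al1, 0, 2*a2, 0],
     [-al3, -al2, -al1, 0, 0, 0, 2*a3]]"

definition matvec :: "real list list \<Rightarrow> real list \<Rightarrow> real list" where
  "matvec M v = map (\<lambda>row. sum_list (map2 (*) row v)) M"

definition bplus :: "(nat \<Rightarrow> real) \<Rightarrow> real list" where
  "bplus b = [b 1, b 2, 0, b 3, b 4, 0, b 5]"
definition bminus :: "(nat \<Rightarrow> real) \<Rightarrow> real list" where
  "bminus b = [b 1, b 4, 0, b 5, b 2, 0, b 3]"
definition cplus :: "(nat \<Rightarrow> real) \<Rightarrow> real list" where
  "cplus c = [c 1, 0, c 2, c 3, 0, c 4, c 5]"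
definition cminus :: "(nat \<Rightarrow> real) \<Rightarrow> real list" where
  "cminus c = [c 1, 0, c 4, c 5, 0, c 2, c 3]"
definition dplus :: "(nat \<Rightarrow> real) \<Rightarrow> real list" where
  "dplus d = [0, d 1, d 2, d 3, d 4, d 5, d 6]"
definition dminus :: "(nat \<Rightarrow> real) \<Rightarrow> real list" where
  "dminus d = [0, d 4, d 5, d 6, d 1, d 2, d 3]"

definition eit :: "real \<Rightarrow> real \<Rightarrow> complex" where
  "eit s t = exp (\<i> * complex_of_real (s * t))"

definition wf1 :: "real \<Rightarrow> real \<Rightarrow> real \<Rightarrow> complex" where
  "wf1 al1 a1 t = \<i> * complex_of_real al1 * eit a1 t / 2"
definition wf2 :: "real \<Rightarrow> real \<Rightarrow> real \<Rightarrow> complex" where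
  "wf2 al2 a2 t = complex_of_real al2 * eit a2 t / 2"
definition wf3 :: "real \<Rightarrow> real \<Rightarrow> real \<Rightarrow> complex" where
  "wf3 al3 a3 t = complex_of_real al3 * eit a3 t / 2"

definition xf :: "real \<Rightarrow> (nat \<Rightarrow> real) \<Rightarrow> (nat \<Rightarrow> real) \<Rightarrow> complex \<Rightarrow> complex \<Rightarrow> real \<Rightarrow> real" where
  "xf lam b c B C t = 2 * Re ((B * of_real (b 1) + C * of_real (c 1)) * eit (lam/2) t)"

definition pf1 :: "real \<Rightarrow> real \<Rightarrow> (nat \<Rightarrow> real) \<Rightarrow> (nat \<Rightarrow> real) \<Rightarrow> complex \<Rightarrow> complex \<Rightarrow> real \<Rightarrow> complex" where
  "pf1 a1 lam b d B D t = \<i> * eit a1 t *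
     (B * of_real (b 2) * eit (lam/2) t + cnj B * of_real (b 4) * eit (-lam/2) t
      + D * of_real (d 1) * eit (3*lam/2) t + cnj D * of_real (d 4) * eit (-3*lam/2) t)"

definition pf2 :: "real \<Rightarrow> real \<Rightarrow> (nat \<Rightarrow> real) \<Rightarrow> (nat \<Rightarrow> real) \<Rightarrow> complex \<Rightarrow> complex \<Rightarrow> real \<Rightarrow> complex" where
  "pf2 a2 lam c d C D t = eit a2 t *
     (C * of_real (c 2) * eit (lam/2) t + cnj C * of_real (c 4) * eit (-lam/2) t
      + D * of_real (d 2) * eit (3*lam/2) t + cnj D * of_real (d 5) * eit (-3*lam/2) t)"

definition pf3 :: "real \<Rightarrow> real \<Rightarrow> (nat \<Rightarrow> real) \<Rightarrow> (nat \<Rightarrow> real) \<Rightarrow> (nat \<Rightarrow> real) \<Rightarrow> complex \<Rightarrow> complex \<Rightarrow> complex \<Rightarrow> real \<Rightarrow> complex" where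
  "pf3 a3 lam b c d B C D t = eit a3 t *
     ((B * of_real (b 3) + C * of_real (c 3)) * eit (lam/2) t
      + (cnj B * of_real (b 5) + cnj C * of_real (c 5)) * eit (-lam/2) t
      + D * of_real (d 3) * eit (3*lam/2) t + cnj D * of_real (d 6) * eit (-3*lam/2) t)"

end

theory Submission
  imports Defs
begin

text \<open>
  The 3-form \<open>\<phi>\<close> defines a cross product on \<open>\<real> \<oplus> \<complex>\<^sup>3\<close> by
  \<open>\<phi>(p, q, r) = \<langle>p \<times> q, r\<rangle>\<close>. Since \<open>\<phi>\<close> is alternating, \<open>p \<times> q\<close> is orthogonal to
  \<open>p\<close> and \<open>q\<close>, and together with \<open>|p \<times> q|\<^sup>2 = |p|\<^sup>2 |q|\<^sup>2 - \<langle>p, q\<rangle>\<^sup>2\<close> this shows that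
  \<open>\<phi>(p, q, p \<times> q) = |p \<times> q|\<^sup>2\<close> is the volume of \<open>(p, q, p \<times> q)\<close>: the plane spanned
  by \<open>p\<close>, \<open>q\<close>, \<open>p \<times> q\<close> is always associative. So it suffices that
  \<open>\<partial>\<^sub>t F = \<partial>\<^sub>y\<^sub>1 F \<times> \<partial>\<^sub>y\<^sub>2 F\<close>. As \<open>F\<close> is quadratic in \<open>(y\<^sub>1, y\<^sub>2)\<close>,
  comparing coefficients of \<open>1, y\<^sub>1, y\<^sub>2, y\<^sub>1\<^sup>2, y\<^sub>2\<^sup>2, y\<^sub>1y\<^sub>2\<close> turns this
  into an ODE system for \<open>w\<close>, \<open>(x, p)\<close>, \<open>(y, q)\<close> and \<open>(z, r)\<close>. The \<open>w\<close>-equations hold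
  because \<open>a\<^sub>1 + a\<^sub>2 + a\<^sub>3 = 0\<close> and \<open>a\<^sub>j\<alpha>\<^sub>j = \<plusminus>\<alpha>\<^sub>k\<alpha>\<^sub>l\<close>; the equations for
  \<open>(x, p)\<close> and \<open>(y, q)\<close> hold frequency by frequency precisely because
  \<open>b\<^sub>+, c\<^sub>+, d\<^sub>+\<close> are eigenvectors of \<open>T\<close>; those for \<open>(z, r)\<close> are hypotheses.
\<close>

section \<open>The cross product of \<open>\<real> \<oplus> \<complex>\<^sup>3\<close>\<close>

definition g2_cross ::
  "real \<times> complex \<times> complex \<times> complex \<Rightarrow> real \<times> complex \<times> complex \<times> complex
     \<Rightarrow> real \<times> complex \<times> complex \<times> complex" where
  "g2_cross p q = (case p of (s, a1, a2, a3) \<Rightarrow> case q of (s', b1, b2, b3) \<Rightarrow>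
     (Im (cnj a1 * b1 + cnj a2 * b2 + cnj a3 * b3),
      \<i> * of_real s * b1 - \<i> * of_real s' * a1 + cnj (a2 * b3 - a3 * b2),
      \<i> * of_real s * b2 - \<i> * of_real s' * a2 + cnj (a3 * b1 - a1 * b3),
      \<i> * of_real s * b3 - \<i> * of_real s' * a3 + cnj (a1 * b2 - a2 * b1)))"

lemma inner7_expand:
  "inner7 u v = u 1 * v 1 + u 2 * v 2 + u 3 * v 3 + u 4 * v 4 + u 5 * v 5 + u 6 * v 6 + u 7 * v 7"
  by (simp add: inner7_def numeral_eq_Suc)

lemma inner7_commute: "inner7 u v = inner7 v u"
  by (simp add: inner7_def mult.commute)

lemma inner7_self_nonneg: "inner7 u u \<ge> 0"
  by (simp add: inner7_def sum_nonneg)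

lemma phi7_self_left: "phi7 u v u = 0"
  by (simp add: phi7_def dx3_def algebra_simps)

lemma phi7_self_right: "phi7 u v v = 0"
  by (simp add: phi7_def dx3_def algebra_simps)

lemma vol3_orthogonal:
  assumes "inner7 u w = 0" and "inner7 v w = 0"
  shows "vol3 u v w = sqrt ((inner7 u u * inner7 v v - (inner7 u v)\<^sup>2) * inner7 w w)"
  using assms unfolding vol3_def Let_def
  by (simp add: inner7_commute[of w u] inner7_commute[of w v] inner7_commute[of v u]
      algebra_simps power2_eq_square)

lemma coords_components:
  "coords p 1 = fst p" "coords p 2 = Re (fst (snd p))" "coords p 3 = Im (fst (snd p))"
  "coords p 4 = Re (fst (snd (snd p)))" "coords p 5 = Im (fst (snd (snd p)))"
  "coords p 6 = Re (snd (snd (snd p)))" "coords p 7 = Im (snd (snd (snd p)))"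
  by (simp_all add: coords_def split: prod.split)

lemma phi7_g2_cross: "phi7 (coords p) (coords q) r = inner7 (coords (g2_cross p q)) r"
  unfolding phi7_def dx3_def inner7_expand coords_components
  by (simp add: g2_cross_def split: prod.split) (simp add: algebra_simps)

lemma inner7_g2_cross_self:
  "inner7 (coords (g2_cross p q)) (coords (g2_cross p q))
     = inner7 (coords p) (coords p) * inner7 (coords q) (coords q) - (inner7 (coords p) (coords q))\<^sup>2"
  unfolding inner7_expand coords_components
  by (simp add: g2_cross_def split: prod.split) (simp add: algebra_simps power2_eq_square)

lemma associative_plane_g2_cross:
  "associative_plane (coords p) (coords q) (coords (g2_cross p q))"
proof -
  let ?u = "coords p" and ?v = "coords q" and ?w = "coords (g2_cross p q)"
  have "inner7 ?u ?w = 0"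
    using phi7_g2_cross[of p q ?u] by (simp add: phi7_self_left inner7_commute)
  moreover have "inner7 ?v ?w = 0"
    using phi7_g2_cross[of p q ?v] by (simp add: phi7_self_right inner7_commute)
  ultimately have "vol3 ?u ?v ?w = sqrt (inner7 ?w ?w * inner7 ?w ?w)"
    by (simp add: vol3_orthogonal inner7_g2_cross_self)
  also have "\<dots> = phi7 ?u ?v ?w"
    by (simp add: inner7_self_nonneg phi7_g2_cross)
  finally show ?thesis
    by (simp add: associative_plane_def)
qed

section \<open>Quadratic ansatz\<close>

lemmas cnj_distribs = complex_cnj_add complex_cnj_diff complex_cnj_cnj complex_cnj_minus
  complex_cnj_mult complex_cnj_complex_of_real

lemmas of_real_distribs = of_real_add of_real_diff of_real_mult of_real_divide of_real_power
  of_real_minus of_real_numeral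

text \<open>The two arguments are \<open>\<partial>\<^sub>y\<^sub>1\<close> and \<open>\<partial>\<^sub>y\<^sub>2\<close> of the ansatz below, and the
  right-hand side is its \<open>\<partial>\<^sub>t\<close> once the coefficient functions satisfy the ODE system.\<close>
lemma g2_cross_ansatz_tangents:
  fixes y1 y2 X Y :: real and W1 W2 W3 P1 P2 P3 Q1 Q2 Q3 :: complex
  shows "g2_cross (Y, of_real y1 * W1 + P1, of_real y1 * W2 + P2, of_real y2 * W3 + Q3)
       (- X, of_real y2 * W1 + Q1, - of_real y2 * W2 - Q2, of_real y1 * W3 + P3)
     = (y1 * Im (cnj W1 * Q1 - cnj W2 * Q2 + cnj Q3 * W3)
         - y2 * Im (cnj W1 * P1 - cnj W2 * P2 + cnj P3 * W3)
         + Im (cnj P1 * Q1 - cnj P2 * Q2 - cnj P3 * Q3),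
       of_real ((y1\<^sup>2 + y2\<^sup>2) / 2) * (2 * cnj (W2 * W3))
         + of_real y1 * (\<i> * of_real X * W1 + cnj (W2 * P3 + P2 * W3))
         + of_real y2 * (\<i> * of_real Y * W1 + cnj (W2 * Q3 + Q2 * W3))
         + (\<i> * of_real X * P1 + \<i> * of_real Y * Q1 + cnj (P2 * P3) + cnj (Q2 * Q3)),
       of_real ((y1\<^sup>2 - y2\<^sup>2) / 2) * (- 2 * cnj (W1 * W3))
         + of_real y1 * (\<i> * of_real X * W2 - cnj (W1 * P3 + P1 * W3))
         - of_real y2 * (\<i> * of_real Y * W2 - cnj (W1 * Q3 + Q1 * W3))
         + (\<i> * of_real X * P2 - \<i> * of_real Y * Q2 - cnj (P3 * P1) + cnj (Q3 * Q1)),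
       of_real (y1 * y2) * (- 2 * cnj (W1 * W2))
         + of_real y1 * (\<i> * of_real Y * W3 - cnj (W1 * Q2 + W2 * Q1))
         + of_real y2 * (\<i> * of_real X * W3 - cnj (W1 * P2 + W2 * P1))
         + (\<i> * of_real X * Q3 + \<i> * of_real Y * P3 - cnj (P1 * Q2) - cnj (P2 * Q1)))"
  unfolding g2_cross_def prod.case prod.inject
proof (intro conjI)
  show "Im (cnj (of_real y1 * W1 + P1) * (of_real y2 * W1 + Q1)
          + cnj (of_real y1 * W2 + P2) * (- of_real y2 * W2 - Q2)
          + cnj (of_real y2 * W3 + Q3) * (of_real y1 * W3 + P3))
      = y1 * Im (cnj W1 * Q1 - cnj W2 * Q2 + cnj Q3 * W3)
         - y2 * Im (cnj W1 * P1 - cnj W2 * P2 + cnj P3 * W3)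
         + Im (cnj P1 * Q1 - cnj P2 * Q2 - cnj P3 * Q3)"
    by (simp add: algebra_simps)
qed (simp only: cnj_distribs of_real_distribs, simp add: field_simps power2_eq_square)+

lemma ansatz_tangent_t_eq_g2_cross:
  fixes X Y z :: "real \<Rightarrow> real" and W1 W2 W3 P1 P2 P3 Q1 Q2 Q3 r1 r2 r3 :: "real \<Rightarrow> complex"
  assumes W1: "(W1 has_vector_derivative 2 * cnj (W2 t * W3 t)) (at t)"
    and W2: "(W2 has_vector_derivative - 2 * cnj (W1 t * W3 t)) (at t)"
    and W3: "(W3 has_vector_derivative - 2 * cnj (W1 t * W2 t)) (at t)"
    and X: "(X has_real_derivative Im (cnj (W1 t) * P1 t - cnj (W2 t) * P2 t + cnj (P3 t) * W3 t)) (at t)"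
    and Y: "(Y has_real_derivative Im (cnj (W1 t) * Q1 t - cnj (W2 t) * Q2 t + cnj (Q3 t) * W3 t)) (at t)"
    and P1: "(P1 has_vector_derivative \<i> * of_real (X t) * W1 t + cnj (W2 t * P3 t + P2 t * W3 t)) (at t)"
    and P2: "(P2 has_vector_derivative \<i> * of_real (X t) * W2 t - cnj (W1 t * P3 t + P1 t * W3 t)) (at t)"
    and P3: "(P3 has_vector_derivative \<i> * of_real (X t) * W3 t - cnj (W1 t * P2 t + W2 t * P1 t)) (at t)"
    and Q1: "(Q1 has_vector_derivative \<i> * of_real (Y t) * W1 t + cnj (W2 t * Q3 t + Q2 t * W3 t)) (at t)"
    and Q2: "(Q2 has_vector_derivative \<i> * of_real (Y t) * W2 t - cnj (W1 t * Q3 t + Q1 t * W3 t)) (at t)"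
    and Q3: "(Q3 has_vector_derivative \<i> * of_real (Y t) * W3 t - cnj (W1 t * Q2 t + W2 t * Q1 t)) (at t)"
    and z: "(z has_real_derivative Im (cnj (P1 t) * Q1 t - cnj (P2 t) * Q2 t - cnj (P3 t) * Q3 t)) (at t)"
    and r1: "(r1 has_vector_derivative
        \<i> * of_real (X t) * P1 t + \<i> * of_real (Y t) * Q1 t + cnj (P2 t * P3 t) + cnj (Q2 t * Q3 t)) (at t)"
    and r2: "(r2 has_vector_derivative
        \<i> * of_real (X t) * P2 t - \<i> * of_real (Y t) * Q2 t - cnj (P3 t * P1 t) + cnj (Q3 t * Q1 t)) (at t)"
    and r3: "(r3 has_vector_derivative
        \<i> * of_real (X t) * Q3 t + \<i> * of_real (Y t) * P3 t - cnj (P1 t * Q2 t) - cnj (P2 t * Q1 t)) (at t)"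
  defines "G \<equiv> \<lambda>y1 y2 t. (y1 * Y t - y2 * X t + z t,
      of_real ((y1\<^sup>2 + y2\<^sup>2) / 2) * W1 t + of_real y1 * P1 t + of_real y2 * Q1 t + r1 t,
      of_real ((y1\<^sup>2 - y2\<^sup>2) / 2) * W2 t + of_real y1 * P2 t - of_real y2 * Q2 t + r2 t,
      of_real (y1 * y2) * W3 t + of_real y1 * Q3 t + of_real y2 * P3 t + r3 t)"
  assumes u: "((\<lambda>s. G s y2 t) has_vector_derivative u) (at y1)"
    and v: "((\<lambda>s. G y1 s t) has_vector_derivative v) (at y2)"
    and w: "((\<lambda>s. G y1 y2 s) has_vector_derivative w) (at t)"
  shows "w = g2_cross u v"
proof -
  have "((\<lambda>s. G s y2 t) has_vector_derivative
      (Y t, of_real y1 * W1 t + P1 t, of_real y1 * W2 t + P2 t, of_real y2 * W3 t + Q3 t)) (at y1)"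
    unfolding G_def
    by (intro has_vector_derivative_Pair) (auto intro!: derivative_eq_intros simp: power2_eq_square)
  with u have u_eq: "u = (Y t, of_real y1 * W1 t + P1 t, of_real y1 * W2 t + P2 t, of_real y2 * W3 t + Q3 t)"
    by (rule vector_derivative_unique_at)
  have "((\<lambda>s. G y1 s t) has_vector_derivative
      (- X t, of_real y2 * W1 t + Q1 t, - of_real y2 * W2 t - Q2 t, of_real y1 * W3 t + P3 t)) (at y2)"
    unfolding G_def
    by (intro has_vector_derivative_Pair) (auto intro!: derivative_eq_intros simp: power2_eq_square)
  with v have v_eq: "v = (- X t, of_real y2 * W1 t + Q1 t, - of_real y2 * W2 t - Q2 t, of_real y1 * W3 t + P3 t)"
    by (rule vector_derivative_unique_at)
  note real_derivatives = X Y z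
  have "((\<lambda>s. G y1 y2 s) has_vector_derivative g2_cross u v) (at t)"
    unfolding G_def u_eq v_eq g2_cross_ansatz_tangents
    by (intro has_vector_derivative_Pair has_vector_derivative_add has_vector_derivative_diff
        has_vector_derivative_mult_right W1 W2 W3 P1 P2 P3 Q1 Q2 Q3 r1 r2 r3
        real_derivatives[unfolded has_real_derivative_iff_has_vector_derivative])
  with w show ?thesis
    by (rule vector_derivative_unique_at)
qed

section \<open>The explicit solution\<close>

lemma has_vector_derivative_eit [derivative_intros]:
  "((\<lambda>t. eit s t) has_vector_derivative \<i> * of_real s * eit s t) (at t within S)"
proof -
  have "((\<lambda>z. exp (\<i> * (of_real s * z))) has_field_derivative
        exp (\<i> * (of_real s * of_real t)) * (\<i> * of_real s)) (at (of_real t))"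
    by (auto intro!: derivative_eq_intros)
  from has_vector_derivative_real_field[OF this] show ?thesis
    by (simp add: eit_def mult_ac)
qed

lemma cnj_eit: "cnj (eit s t) = eit (- s) t"
  by (simp add: eit_def exp_cnj)

lemma eit_add: "eit s t * eit s' t = eit (s + s') t"
  by (simp add: eit_def exp_add[symmetric] algebra_simps)

lemma eit_mult_eit_uminus: "eit s t * eit (- s) t = 1"
  unfolding eit_add by (simp add: eit_def)

lemma eit_uminus_mult_eit_uminus:
  assumes "s1 + s2 + s3 = 0"
  shows "eit (- s2) t * eit (- s3) t = eit s1 t"
proof -
  have "- s2 + - s3 = s1"
    using assms by linarith
  then show ?thesis
    unfolding eit_add by simp
qed

lemma of_real_Re_eq: "complex_of_real (Re z) = (z + cnj z) / 2"
  by (simp add: complex_eq_iff)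

lemma of_real_Im_eq: "complex_of_real (Im z) = - \<i> * (z - cnj z) / 2"
  by (simp add: complex_eq_iff)

lemma of_real_xf:
  "complex_of_real (xf lam b c B C t)
     = (B * of_real (b 1) + C * of_real (c 1)) * eit (lam / 2) t
       + cnj (B * of_real (b 1) + C * of_real (c 1)) * eit (- (lam / 2)) t"
  unfolding xf_def of_real_mult of_real_Re_eq by (simp add: cnj_eit)

lemma wf1_has_vector_derivative:
  assumes "a1 + a2 + a3 = 0" and "a1 * al1 = - (al2 * al3)"
  shows "(wf1 al1 a1 has_vector_derivative 2 * cnj (wf2 al2 a2 t * wf3 al3 a3 t)) (at t)"
proof -
  have e: "eit (- a2) t * eit (- a3) t = eit a1 t"
    by (rule eit_uminus_mult_eit_uminus) (use assms(1) in linarith)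
  have rel: "of_real a1 * of_real al1 = (- (of_real al2 * of_real al3) :: complex)"
    using assms(2) by (metis of_real_minus of_real_mult)
  show ?thesis
    unfolding wf1_def wf2_def wf3_def
    apply (rule has_vector_derivative_eq_rhs, (rule derivative_eq_intros refl)+)
    apply (simp add: cnj_eit field_simps e)
    by (simp add: rel flip: mult.assoc)
qed

lemma wf2_has_vector_derivative:
  assumes "a1 + a2 + a3 = 0" and "a2 * al2 = al3 * al1"
  shows "(wf2 al2 a2 has_vector_derivative - 2 * cnj (wf1 al1 a1 t * wf3 al3 a3 t)) (at t)"
proof -
  have e: "eit (- a1) t * eit (- a3) t = eit a2 t"
    by (rule eit_uminus_mult_eit_uminus) (use assms(1) in linarith)
  have rel: "of_real a2 * of_real al2 = (of_real al3 * of_real al1 :: complex)"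
    using assms(2) by (metis of_real_mult)
  show ?thesis
    unfolding wf1_def wf2_def wf3_def
    apply (rule has_vector_derivative_eq_rhs, (rule derivative_eq_intros refl)+)
    apply (simp add: cnj_eit field_simps e)
    by (simp add: rel flip: mult.assoc)
qed

lemma wf3_has_vector_derivative:
  assumes "a1 + a2 + a3 = 0" and "a3 * al3 = al1 * al2"
  shows "(wf3 al3 a3 has_vector_derivative - 2 * cnj (wf1 al1 a1 t * wf2 al2 a2 t)) (at t)"
proof -
  have e: "eit (- a1) t * eit (- a2) t = eit a3 t"
    by (rule eit_uminus_mult_eit_uminus) (use assms(1) in linarith)
  have rel: "of_real a3 * of_real al3 = (of_real al1 * of_real al2 :: complex)"
    using assms(2) by (metis of_real_mult)
  show ?thesis
    unfolding wf1_def wf2_def wf3_def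
    apply (rule has_vector_derivative_eq_rhs, (rule derivative_eq_intros refl)+)
    apply (simp add: cnj_eit field_simps e)
    by (simp add: rel flip: mult.assoc)
qed

lemma Tmat_bplus_eigen_rows:
  assumes "matvec (Tmat al1 al2 al3 a1 a2 a3) (bplus b) = map (\<lambda>s. mu * s) (bplus b)"
  shows "al1 * (b 4 - b 2) + al3 * (b 3 - b 5) = 2 * mu * b 1"
    and "al1 * b 1 - 2 * a1 * b 2 - al2 * b 5 = mu * b 2"
    and "al2 * b 1 + al3 * b 4 + al1 * b 5 = 0"
    and "al3 * b 1 - 2 * a3 * b 3 + al2 * b 4 = mu * b 3"
    and "- al1 * b 1 + al2 * b 3 + 2 * a1 * b 4 = mu * b 4"
    and "al2 * b 1 + al3 * b 2 + al1 * b 3 = 0"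
    and "- al3 * b 1 - al2 * b 2 + 2 * a3 * b 5 = mu * b 5"
  using assms by (simp_all add: Tmat_def matvec_def bplus_def) argo+

lemma Tmat_cplus_eigen_rows:
  assumes "matvec (Tmat al1 al2 al3 a1 a2 a3) (cplus c) = map (\<lambda>s. mu * s) (cplus c)"
  shows "al2 * (c 2 - c 4) + al3 * (c 3 - c 5) = 2 * mu * c 1"
    and "al1 * c 1 - al3 * c 4 - al2 * c 5 = 0"
    and "al2 * c 1 - 2 * a2 * c 2 + al1 * c 5 = mu * c 2"
    and "al3 * c 1 - 2 * a3 * c 3 + al1 * c 4 = mu * c 3"
    and "- al1 * c 1 + al3 * c 2 + al2 * c 3 = 0"
    and "- al2 * c 1 - al1 * c 3 + 2 * a2 * c 4 = mu * c 4"
    and "- al3 * c 1 - al1 * c 2 + 2 * a3 * c 5 = mu * c 5"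
  using assms by (simp_all add: Tmat_def matvec_def cplus_def) argo+

lemma Tmat_dplus_eigen_rows:
  assumes "matvec (Tmat al1 al2 al3 a1 a2 a3) (dplus d) = map (\<lambda>s. mu * s) (dplus d)"
  shows "al1 * (d 4 - d 1) + al2 * (d 2 - d 5) + al3 * (d 3 - d 6) = 0"
    and "- 2 * a1 * d 1 - al3 * d 5 - al2 * d 6 = mu * d 1"
    and "- 2 * a2 * d 2 + al3 * d 4 + al1 * d 6 = mu * d 2"
    and "- 2 * a3 * d 3 + al2 * d 4 + al1 * d 5 = mu * d 3"
    and "al3 * d 2 + al2 * d 3 + 2 * a1 * d 4 = mu * d 4"
    and "- al3 * d 1 - al1 * d 3 + 2 * a2 * d 5 = mu * d 5"
    and "- al2 * d 1 - al1 * d 2 + 2 * a3 * d 6 = mu * d 6"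
  using assms by (simp_all add: Tmat_def matvec_def dplus_def) argo+

locale eigenvector_data =
  fixes al1 al2 al3 a1 a2 a3 lam :: real and b c d :: "nat \<Rightarrow> real"
  assumes a_sum: "a1 + a2 + a3 = 0"
    and b_eigen: "matvec (Tmat al1 al2 al3 a1 a2 a3) (bplus b) = map (\<lambda>s. lam * s) (bplus b)"
    and c_eigen: "matvec (Tmat al1 al2 al3 a1 a2 a3) (cplus c) = map (\<lambda>s. lam * s) (cplus c)"
    and d_eigen: "matvec (Tmat al1 al2 al3 a1 a2 a3) (dplus d) = map (\<lambda>s. 3 * lam * s) (dplus d)"
begin

lemmas b_rows = Tmat_bplus_eigen_rows[OF b_eigen,
  THEN arg_cong[where f = "of_real :: real \<Rightarrow> complex"], unfolded of_real_distribs of_real_0]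
lemmas c_rows = Tmat_cplus_eigen_rows[OF c_eigen,
  THEN arg_cong[where f = "of_real :: real \<Rightarrow> complex"], unfolded of_real_distribs of_real_0]
lemmas d_rows = Tmat_dplus_eigen_rows[OF d_eigen,
  THEN arg_cong[where f = "of_real :: real \<Rightarrow> complex"], unfolded of_real_distribs of_real_0]

text \<open>In the proofs below, \<open>One_nat_def\<close> is removed from the simplifier: it would turn
  \<open>b 1\<close> into \<open>b (Suc 0)\<close> in the goals but not in these rows.\<close>

lemma xf_has_real_derivative:
  "(xf lam b c B C has_real_derivative
     Im (cnj (wf1 al1 a1 t) * pf1 a1 lam b d B D t - cnj (wf2 al2 a2 t) * pf2 a2 lam c d C D t
       + cnj (pf3 a3 lam b c d B C D t) * wf3 al3 a3 t)) (at t)"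
proof -
  define K where "K = B * of_real (b 1) + C * of_real (c 1)"
  have xf_eq: "xf lam b c B C = (\<lambda>s. 2 * Re (K * eit (lam / 2) s))"
    by (simp add: xf_def K_def fun_eq_iff)
  have derivative: "((\<lambda>s. 2 * Re (K * eit (lam / 2) s)) has_vector_derivative
      2 * Re (K * (\<i> * of_real (lam / 2) * eit (lam / 2) t))) (at t)"
    by (intro has_vector_derivative_mult_right bounded_linear.has_vector_derivative[OF bounded_linear_Re]
        has_vector_derivative_eit)
  have derivative_eq: "2 * Re (K * (\<i> * of_real (lam / 2) * eit (lam / 2) t))
      = Im (cnj (wf1 al1 a1 t) * pf1 a1 lam b d B D t - cnj (wf2 al2 a2 t) * pf2 a2 lam c d C D t
         + cnj (pf3 a3 lam b c d B C D t) * wf3 al3 a3 t)"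
    apply (subst of_real_eq_iff[symmetric, where 'a = complex])
    apply (simp only: K_def of_real_Re_eq of_real_Im_eq of_real_distribs cnj_distribs cnj_eit
      complex_cnj_i complex_cnj_divide complex_cnj_numeral wf1_def wf2_def wf3_def pf1_def pf2_def pf3_def)
    apply (simp add: field_simps del: One_nat_def)
    using b_rows(1) c_rows(1) d_rows(1) eit_mult_eit_uminus[of a1 t] eit_mult_eit_uminus[of a2 t]
      eit_mult_eit_uminus[of a3 t] by algebra
  show ?thesis
    unfolding has_real_derivative_iff_has_vector_derivative xf_eq derivative_eq[symmetric] by (rule derivative)
qed

lemma pf1_has_vector_derivative:
  "(pf1 a1 lam b d B D has_vector_derivative
     \<i> * of_real (xf lam b c B C t) * wf1 al1 a1 t
       + cnj (wf2 al2 a2 t * pf3 a3 lam b c d B C D t + pf2 a2 lam c d C D t * wf3 al3 a3 t)) (at t)"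
proof -
  have e: "eit (- a2) t * eit (- a3) t = eit a1 t"
    by (rule eit_uminus_mult_eit_uminus) (use a_sum in linarith)
  show ?thesis
    unfolding pf1_def
    apply (rule has_vector_derivative_eq_rhs, (rule derivative_eq_intros refl)+)
    apply (simp add: of_real_xf wf1_def wf2_def wf3_def pf2_def pf3_def cnj_eit field_simps
        del: One_nat_def)
    using b_rows(2,5) c_rows(2,5) d_rows(2,5) e by algebra
qed

lemma pf2_has_vector_derivative:
  "(pf2 a2 lam c d C D has_vector_derivative
     \<i> * of_real (xf lam b c B C t) * wf2 al2 a2 t
       - cnj (wf1 al1 a1 t * pf3 a3 lam b c d B C D t + pf1 a1 lam b d B D t * wf3 al3 a3 t)) (at t)"
proof -
  have e: "eit (- a1) t * eit (- a3) t = eit a2 t"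
    by (rule eit_uminus_mult_eit_uminus) (use a_sum in linarith)
  show ?thesis
    unfolding pf2_def
    apply (rule has_vector_derivative_eq_rhs, (rule derivative_eq_intros refl)+)
    apply (simp add: of_real_xf wf1_def wf2_def wf3_def pf1_def pf3_def cnj_eit field_simps
        del: One_nat_def)
    using b_rows(3,6) c_rows(3,6) d_rows(3,6) e by algebra
qed

lemma pf3_has_vector_derivative:
  "(pf3 a3 lam b c d B C D has_vector_derivative
     \<i> * of_real (xf lam b c B C t) * wf3 al3 a3 t
       - cnj (wf1 al1 a1 t * pf2 a2 lam c d C D t + wf2 al2 a2 t * pf1 a1 lam b d B D t)) (at t)"
proof -
  have e: "eit (- a1) t * eit (- a2) t = eit a3 t"
    by (rule eit_uminus_mult_eit_uminus) (use a_sum in linarith)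
  show ?thesis
    unfolding pf3_def
    apply (rule has_vector_derivative_eq_rhs, (rule derivative_eq_intros refl)+)
    apply (simp add: of_real_xf wf1_def wf2_def wf3_def pf1_def pf2_def cnj_eit field_simps
        del: One_nat_def)
    using b_rows(4,7) c_rows(4,7) d_rows(4,7) e by algebra
qed

end

theorem theorem5p6:
  fixes al1 al2 al3 a1 a2 a3 lam :: real
    and b c d :: "nat \<Rightarrow> real"
    and B B' C C' D D' :: complex
    and z :: "real \<Rightarrow> real"
    and r1 r2 r3 :: "real \<Rightarrow> complex"
  assumes pos: "al1 > 0" "al2 > 0" "al3 > 0"
    and alrel: "1 / al1^2 = 1 / al2^2 + 1 / al3^2"
    and a1_def: "a1 = - al2 * al3 / al1"
    and a2_def: "a2 = al3 * al1 / al2"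
    and a3_def: "a3 = al1 * al2 / al3"
    and lam_pos: "lam > 0"
    and lam_sq: "lam^2 = a2^2 - a1 * a3"
    and b_nz: "bplus b \<noteq> replicate 7 0" "bminus b \<noteq> replicate 7 0"
    and c_nz: "cplus c \<noteq> replicate 7 0" "cminus c \<noteq> replicate 7 0"
    and d_nz: "dplus d \<noteq> replicate 7 0" "dminus d \<noteq> replicate 7 0"
    and b_eig: "matvec (Tmat al1 al2 al3 a1 a2 a3) (bplus b) = map (\<lambda>s. lam * s) (bplus b)"
               "matvec (Tmat al1 al2 al3 a1 a2 a3) (bminus b) = map (\<lambda>s. - lam * s) (bminus b)"
    and c_eig: "matvec (Tmat al1 al2 al3 a1 a2 a3) (cplus c) = map (\<lambda>s. lam * s) (cplus c)"
               "matvec (Tmat al1 al2 al3 a1 a2 a3) (cminus c) = map (\<lambda>s. - lam * s) (cminus c)"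
    and d_eig: "matvec (Tmat al1 al2 al3 a1 a2 a3) (dplus d) = map (\<lambda>s. 3 * lam * s) (dplus d)"
               "matvec (Tmat al1 al2 al3 a1 a2 a3) (dminus d) = map (\<lambda>s. - 3 * lam * s) (dminus d)"
    and z_deriv: "\<And>t. (z has_real_derivative
        Im (cnj (pf1 a1 lam b d B D t) * pf1 a1 lam b d B' D' t
          - cnj (pf2 a2 lam c d C D t) * pf2 a2 lam c d C' D' t
          - cnj (pf3 a3 lam b c d B C D t) * pf3 a3 lam b c d B' C' D' t)) (at t)"
    and r1_deriv: "\<And>t. (r1 has_vector_derivative
        (\<i> * of_real (xf lam b c B C t) * pf1 a1 lam b d B D t
         + \<i> * of_real (xf lam b c B' C' t) * pf1 a1 lam b d B' D' t
         + cnj (pf2 a2 lam c d C D t * pf3 a3 lam b c d B C D t)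
         + cnj (pf2 a2 lam c d C' D' t * pf3 a3 lam b c d B' C' D' t))) (at t)"
    and r2_deriv: "\<And>t. (r2 has_vector_derivative
        (\<i> * of_real (xf lam b c B C t) * pf2 a2 lam c d C D t
         - \<i> * of_real (xf lam b c B' C' t) * pf2 a2 lam c d C' D' t
         - cnj (pf3 a3 lam b c d B C D t * pf1 a1 lam b d B D t)
         + cnj (pf3 a3 lam b c d B' C' D' t * pf1 a1 lam b d B' D' t))) (at t)"
    and r3_deriv: "\<And>t. (r3 has_vector_derivative
        (\<i> * of_real (xf lam b c B C t) * pf3 a3 lam b c d B' C' D' t
         + \<i> * of_real (xf lam b c B' C' t) * pf3 a3 lam b c d B C D t
         - cnj (pf1 a1 lam b d B D t * pf2 a2 lam c d C' D' t)
         - cnj (pf2 a2 lam c d C D t * pf1 a1 lam b d B' D' t))) (at t)"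
  defines "F \<equiv> (\<lambda>y1 y2 t. (
        y1 * xf lam b c B' C' t - y2 * xf lam b c B C t + z t,
        of_real ((y1^2 + y2^2) / 2) * wf1 al1 a1 t + of_real y1 * pf1 a1 lam b d B D t
          + of_real y2 * pf1 a1 lam b d B' D' t + r1 t,
        of_real ((y1^2 - y2^2) / 2) * wf2 al2 a2 t + of_real y1 * pf2 a2 lam c d C D t
          - of_real y2 * pf2 a2 lam c d C' D' t + r2 t,
        of_real (y1 * y2) * wf3 al3 a3 t + of_real y1 * pf3 a3 lam b c d B' C' D' t
          + of_real y2 * pf3 a3 lam b c d B C D t + r3 t)
      :: real \<times> complex \<times> complex \<times> complex)"
  shows "\<forall>y1 y2 t u v w.
     ((\<lambda>s. F s y2 t) has_vector_derivative u) (at y1) \<and>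
     ((\<lambda>s. F y1 s t) has_vector_derivative v) (at y2) \<and>
     ((\<lambda>s. F y1 y2 s) has_vector_derivative w) (at t) \<and>
     \<not> dependent {u, v, w} \<and> card {u, v, w} = 3
     \<longrightarrow> associative_plane (coords u) (coords v) (coords w)"
proof -
  have al_nonzero: "al1 \<noteq> 0" "al2 \<noteq> 0" "al3 \<noteq> 0"
    using pos by auto
  have a_sum: "a1 + a2 + a3 = 0"
    using alrel al_nonzero unfolding a1_def a2_def a3_def by (simp add: field_simps power2_eq_square)
  have a_rel: "a1 * al1 = - (al2 * al3)" "a2 * al2 = al3 * al1" "a3 * al3 = al1 * al2"
    using al_nonzero by (simp_all add: a1_def a2_def a3_def)
  txt \<open>Neither are the conditions on \<open>\<lambda>\<close> or the nonvanishing of the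
    eigenvectors.\<close>
  interpret eigenvector_data al1 al2 al3 a1 a2 a3 lam b c d
    by unfold_locales (fact a_sum b_eig(1) c_eig(1) d_eig(1))+
  have "w = g2_cross u v"
    if "((\<lambda>s. F s y2 t) has_vector_derivative u) (at y1)"
      and "((\<lambda>s. F y1 s t) has_vector_derivative v) (at y2)"
      and "((\<lambda>s. F y1 y2 s) has_vector_derivative w) (at t)" for y1 y2 t u v w
    using that unfolding F_def
    by (rule ansatz_tangent_t_eq_g2_cross[where
          ?W1.0 = "wf1 al1 a1" and ?W2.0 = "wf2 al2 a2" and ?W3.0 = "wf3 al3 a3"
          and X = "xf lam b c B C" and ?P1.0 = "pf1 a1 lam b d B D" and ?P2.0 = "pf2 a2 lam c d C D"
          and ?P3.0 = "pf3 a3 lam b c d B C D" and Y = "xf lam b c B' C'"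
          and ?Q1.0 = "pf1 a1 lam b d B' D'" and ?Q2.0 = "pf2 a2 lam c d C' D'"
          and ?Q3.0 = "pf3 a3 lam b c d B' C' D'",
          OF wf1_has_vector_derivative[OF a_sum a_rel(1)] wf2_has_vector_derivative[OF a_sum a_rel(2)]
          wf3_has_vector_derivative[OF a_sum a_rel(3)] xf_has_real_derivative xf_has_real_derivative
          pf1_has_vector_derivative pf2_has_vector_derivative pf3_has_vector_derivative
          pf1_has_vector_derivative pf2_has_vector_derivative pf3_has_vector_derivative
          z_deriv r1_deriv r2_deriv r3_deriv])
  then show ?thesis
    using associative_plane_g2_cross by blast
qed

end
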